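(* Let $B=B(x,r)\subset\mathbb{R}^n$ be any ball. There exists a constant $c=c(n)>0$ such that for any non-constant harmonic function $u$ defined in $2B$ satisfying $u(x)\geq 0$, we have $$\sup_{\frac43 B} u\geq c\,\sup_B|u|.$$
   Context: For a ball $B=B(x,r)$ and $k>0$, $kB=B(x,kr)$. *)

theory Defs
  imports "HOL-Analysis.Analysis"
begin

text \<open>Classical harmonic function on an open set S: u is C^2 on S and its Laplacian
  (trace of the Hessian) vanishes. grad x is the gradient of u at x, hess x is the
  (Frechet) derivative of the gradient at x, a linear map; the Laplacian is
  the sum over the basis vectors i of (hess x i) dot i.\<close>
definition harmonic_on :: "('a::euclidean_space \<Rightarrow> real) \<Rightarrow> 'a set \<Rightarrow> bool" where
  "harmonic_on u S \<longleftrightarrow> open S \<and>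
     (\<exists>grad :: 'a \<Rightarrow> 'a. \<exists>hess :: 'a \<Rightarrow> 'a \<Rightarrow> 'a.
        (\<forall>x\<in>S. (u has_derivative (\<lambda>h. grad x \<bullet> h)) (at x)) \<and>
        (\<forall>x\<in>S. (grad has_derivative hess x) (at x)) \<and>
        (\<forall>i\<in>Basis. continuous_on S (\<lambda>x. hess x i)) \<and>
        (\<forall>x\<in>S. (\<Sum>i\<in>Basis. hess x i \<bullet> i) = 0))"

end

theory Submission
  imports Defs
begin

text \<open>
  Harmonic functions satisfy a weighted mean value property with the weight
  \<open>bump z = max 0 (1 - \<bar>z\<bar>\<^sup>2) ^ 3\<close>: the integral of \<open>bump z * v (p + \<rho> z)\<close> does not depend
  on \<open>\<rho>\<close>. Its \<open>\<rho>\<close>-derivative is the integral of \<open>bump z * (\<nabla>v (p + \<rho> z) \<bullet> z)\<close>, and since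
  \<open>bump z *\<^sub>R z\<close> is the gradient of \<open>bump_potential z = - max 0 (1 - \<bar>z\<bar>\<^sup>2) ^ 4 / 8\<close>,
  integration by parts turns it into \<open>- \<rho>\<close> times the integral of
  \<open>bump_potential z * \<Delta>v (p + \<rho> z)\<close>, which vanishes.

  Let \<open>M\<close> be the supremum of \<open>u\<close> on \<open>4/3 B\<close>, so \<open>M \<ge> u x \<ge> 0\<close>, and apply this to the
  nonnegative harmonic function \<open>w = M - u\<close>. For \<open>y \<in> B\<close>, the weight of radius \<open>r/6\<close>
  centred at \<open>y\<close> is at most \<open>(64/15)\<^sup>3\<close> times the weight of radius \<open>4r/3\<close> centred at \<open>x\<close>,
  so comparing the two mean values gives \<open>w y \<le> C * w x \<le> C * M\<close> with
  \<open>C = 8\<^sup>n (64/15)\<^sup>3\<close>. Hence \<open>-u y \<le> C * M\<close> and \<open>u y \<le> M\<close> on \<open>B\<close>.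
\<close>

lemma continuous_on_cutoff_mult:
  fixes c f :: "'b::topological_space \<Rightarrow> real"
  assumes "open A" "continuous_on A f" "continuous_on T c" "closed K" "T \<inter> K \<subseteq> A"
    and "\<And>y. y \<in> T \<Longrightarrow> y \<notin> K \<Longrightarrow> c y = 0"
  shows "continuous_on T (\<lambda>y. c y * f y)"
proof -
  have T: "(T \<inter> A) \<union> (T - K) = T"
    using assms(5) by auto
  have "continuous_on ((T \<inter> A) \<union> (T - K)) (\<lambda>y. c y * f y)"
  proof (rule continuous_on_Un_local_open)
    show "openin (top_of_set (T \<inter> A \<union> (T - K))) (T \<inter> A)"
      unfolding T using assms(1) by (rule openin_open_Int)
    show "openin (top_of_set (T \<inter> A \<union> (T - K))) (T - K)"
      using openin_open_Int[of "- K" T] assms(4) unfolding T by (simp add: Diff_eq open_Compl)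
    show "continuous_on (T \<inter> A) (\<lambda>y. c y * f y)"
      by (intro continuous_intros continuous_on_subset[OF assms(3)] continuous_on_subset[OF assms(2)]) auto
    show "continuous_on (T - K) (\<lambda>y. c y * f y)"
      by (rule continuous_on_eq[where f="\<lambda>_. 0"]) (use assms(6) in auto)
  qed
  then show ?thesis
    unfolding T .
qed

lemma has_real_derivative_max_0_power:
  fixes s :: real
  assumes "2 \<le> k"
  shows "((\<lambda>s. (max 0 s) ^ k) has_real_derivative k * (max 0 s) ^ (k - 1)) (at s)"
proof (cases s "0::real" rule: linorder_cases)
  case less
  have "((\<lambda>s. 0) has_real_derivative 0) (at s)"
    by simp
  then have "((\<lambda>s. (max 0 s) ^ k) has_real_derivative 0) (at s)"
    by (rule has_field_derivative_transform_within_open[where S="{..<0}"]) (use less assms in auto)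
  then show ?thesis
    using less assms by (simp add: power_0_left)
next
  case equal
  have "(max 0 z) ^ k - (max 0 0) ^ k = (max 0 z) ^ (k - 1) * (z - 0)" for z :: real
  proof (cases "z \<le> 0")
    case True
    then show ?thesis
      using assms by (simp add: power_0_left)
  next
    case False
    then show ?thesis
      using assms power_minus_mult[of k z] by simp
  qed
  moreover have "isCont (\<lambda>z::real. (max 0 z) ^ (k - 1)) 0"
    by (intro continuous_intros)
  ultimately show ?thesis
    using equal assms by (auto simp: CARAT_DERIV)
next
  case greater
  have "((\<lambda>s. s ^ k) has_real_derivative k * (max 0 s) ^ (k - 1)) (at s)"
    using DERIV_pow[of k s] greater by simp
  then show ?thesis
    by (rule has_field_derivative_transform_within_open[where S="{0<..}"]) (use greater in auto)
qed

definition bump :: "'a::euclidean_space \<Rightarrow> real" where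
  "bump z = (max 0 (1 - z \<bullet> z)) ^ 3"

definition bump_potential :: "'a::euclidean_space \<Rightarrow> real" where
  "bump_potential z = - ((max 0 (1 - z \<bullet> z)) ^ 4) / 8"

lemma one_le_inner_self: "1 \<le> norm z \<Longrightarrow> 1 \<le> z \<bullet> z"
  by (metis one_le_power power2_norm_eq_inner)

lemma bump_eq_0: "1 \<le> norm z \<Longrightarrow> bump z = 0"
  by (simp add: bump_def one_le_inner_self)

lemma bump_potential_eq_0: "1 \<le> norm z \<Longrightarrow> bump_potential z = 0"
  by (simp add: bump_potential_def one_le_inner_self)

lemma bump_nonneg: "0 \<le> bump z"
  by (simp add: bump_def)

lemma bump_le_1: "bump z \<le> 1"
  unfolding bump_def by (simp add: power_le_one)

lemma bump_0: "bump 0 = 1"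
  by (simp add: bump_def)

lemma bump_ge:
  assumes "norm z \<le> s" "s \<le> 1"
  shows "(1 - s\<^sup>2) ^ 3 \<le> bump z"
proof -
  have "0 \<le> s"
    using assms(1) norm_ge_zero order_trans by blast
  then have "z \<bullet> z \<le> s\<^sup>2" "s\<^sup>2 \<le> 1"
    using assms by (metis norm_ge_zero power2_norm_eq_inner power_mono, simp add: power_le_one)
  then show ?thesis
    unfolding bump_def by (intro power_mono) auto
qed

lemma continuous_on_bump: "continuous_on S bump"
  unfolding bump_def by (intro continuous_intros)

lemma continuous_on_bump_potential: "continuous_on S bump_potential"
  unfolding bump_potential_def by (intro continuous_intros) auto

lemma has_derivative_bump_potential:
  "(bump_potential has_derivative (\<lambda>h. bump z * (z \<bullet> h))) (at z)"
proof -
  define m where "m = max 0 (1 - z \<bullet> z)"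
  have "((\<lambda>z. 1 - z \<bullet> z) has_derivative (\<lambda>h. - (2 * (z \<bullet> h)))) (at z)"
    by (auto intro!: derivative_eq_intros simp: inner_commute)
  moreover have "((\<lambda>s. (max 0 s) ^ 4) has_derivative (*) (4 * m ^ 3)) (at (1 - z \<bullet> z))"
    using has_real_derivative_max_0_power[of 4] by (simp add: has_field_derivative_def m_def)
  ultimately have "((\<lambda>z. (max 0 (1 - z \<bullet> z)) ^ 4) has_derivative (\<lambda>h. 4 * m ^ 3 * - (2 * (z \<bullet> h)))) (at z)"
    by (rule has_derivative_compose)
  from has_derivative_mult_right[OF this, of "- 1 / 8"]
  show ?thesis
    by (simp add: bump_potential_def[abs_def] bump_def m_def)
qed

lemma cball_0_subset_cbox: "cball 0 k \<subseteq> cbox (- (k *\<^sub>R One)) (k *\<^sub>R One :: 'a::euclidean_space)"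
proof (rule subsetI, rule ccontr)
  fix x :: 'a
  assume "x \<in> cball 0 k" "x \<notin> cbox (- (k *\<^sub>R One)) (k *\<^sub>R One)"
  then obtain b where "b \<in> Basis" "k < \<bar>x \<bullet> b\<bar>" "norm x \<le> k"
    by (auto simp: mem_box inner_minus_left)
  then show False
    using Basis_le_norm[of b x] by simp
qed

lemma has_integral_UNIV_iff_cbox:
  fixes f :: "'a::euclidean_space \<Rightarrow> real"
  assumes "\<And>x. k \<le> norm x \<Longrightarrow> f x = 0"
  shows "(f has_integral I) UNIV \<longleftrightarrow> (f has_integral I) (cbox (- (k *\<^sub>R One)) (k *\<^sub>R One))"
proof -
  have "(\<lambda>x. if x \<in> cbox (- (k *\<^sub>R One)) (k *\<^sub>R One) then f x else 0) = f"
    using assms cball_0_subset_cbox[of k] by (force simp: subset_iff)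
  then show ?thesis
    by (metis has_integral_restrict_UNIV)
qed

lemma integrable_on_UNIV_if_vanishing:
  fixes f :: "'a::euclidean_space \<Rightarrow> real"
  assumes "continuous_on UNIV f" "\<And>x. k \<le> norm x \<Longrightarrow> f x = 0"
  shows "f integrable_on UNIV"
proof -
  have "f integrable_on cbox (- (k *\<^sub>R One)) (k *\<^sub>R One)"
    by (intro integrable_continuous continuous_on_subset[OF assms(1)]) simp
  then show ?thesis
    using has_integral_UNIV_iff_cbox[where f=f, OF assms(2)] by (auto simp: integrable_on_def)
qed

lemma has_integral_affinity_UNIV:
  fixes f :: "'a::euclidean_space \<Rightarrow> real"
  assumes f: "(f has_integral I) UNIV" and f0: "\<And>x. k \<le> norm x \<Longrightarrow> f x = 0" and "m \<noteq> 0"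
  shows "((\<lambda>x. f (m *\<^sub>R x + c)) has_integral I / \<bar>m\<bar> ^ DIM('a)) UNIV"
proof -
  let ?Q = "cbox (- (k *\<^sub>R One)) (k *\<^sub>R One :: 'a)"
  have "(f has_integral I) ?Q"
    using f has_integral_UNIV_iff_cbox[where f=f and k=k, OF f0] by blast
  from has_integral_affinity[OF this \<open>m \<noteq> 0\<close>, of c]
  have "((\<lambda>x. f (m *\<^sub>R x + c)) has_integral I / \<bar>m\<bar> ^ DIM('a))
      ((\<lambda>x. (1 / m) *\<^sub>R x - (1 / m) *\<^sub>R c) ` ?Q)"
    by (simp add: divide_inverse_commute)
  then show ?thesis
  proof (rule has_integral_on_superset)
    fix x
    assume "x \<notin> (\<lambda>x. (1 / m) *\<^sub>R x - (1 / m) *\<^sub>R c) ` ?Q"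
    moreover have "x = (1 / m) *\<^sub>R (m *\<^sub>R x + c) - (1 / m) *\<^sub>R c"
      using \<open>m \<noteq> 0\<close> by (simp add: algebra_simps)
    ultimately have "m *\<^sub>R x + c \<notin> cball 0 k"
      using cball_0_subset_cbox[of k] by blast
    then show "f (m *\<^sub>R x + c) = 0"
      by (intro f0) simp
  qed simp
qed

lemma one_le_norm_add:
  fixes z v :: "'a::real_normed_vector"
  assumes "2 \<le> norm z" "norm v \<le> 1"
  shows "1 \<le> norm (z + v)"
  using norm_diff_ineq[of z v] assms by simp

lemma uniform_approx_by_difference_quotient:
  fixes G D :: "'a::euclidean_space \<Rightarrow> real"
  assumes i: "norm i = 1"
    and deriv: "\<And>z. ((\<lambda>s. G (z + s *\<^sub>R i)) has_real_derivative D z) (at 0)"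
    and D_cont: "continuous_on UNIV D"
    and G0: "\<And>z. 1 \<le> norm z \<Longrightarrow> G z = 0" and D0: "\<And>z. 1 \<le> norm z \<Longrightarrow> D z = 0"
    and "0 < e"
  obtains t where "0 < t" "t \<le> 1" "\<And>z. \<bar>D z - (G (z + t *\<^sub>R i) - G z) / t\<bar> \<le> e"
proof -
  have "uniformly_continuous_on (cball 0 3) D"
    using D_cont by (intro compact_uniformly_continuous) (auto intro: continuous_on_subset)
  then obtain d where "0 < d"
    and d: "\<And>x y. x \<in> cball 0 3 \<Longrightarrow> y \<in> cball 0 3 \<Longrightarrow> dist y x < d \<Longrightarrow> dist (D y) (D x) < e"
    using \<open>0 < e\<close> unfolding uniformly_continuous_on_def by metis
  define t where "t = min (d / 2) 1"
  have t: "0 < t" "t < d" "t \<le> 1"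
    using \<open>0 < d\<close> by (auto simp: t_def)
  have "\<bar>D z - (G (z + t *\<^sub>R i) - G z) / t\<bar> \<le> e" for z
  proof (cases "2 \<le> norm z")
    case True
    then show ?thesis
      using one_le_norm_add[of z "t *\<^sub>R i"] t i G0 D0 \<open>0 < e\<close> by simp
  next
    case False
    have "((\<lambda>s. G (z + s *\<^sub>R i)) has_real_derivative D (z + s *\<^sub>R i)) (at s)" for s
      using deriv[of "z + s *\<^sub>R i"] DERIV_shift[of "\<lambda>s. G (z + s *\<^sub>R i)" _ 0 s]
      by (simp add: algebra_simps)
    then obtain \<xi> where \<xi>: "0 < \<xi>" "\<xi> < t" "G (z + t *\<^sub>R i) - G z = t * D (z + \<xi> *\<^sub>R i)"
      using MVT2[OF \<open>0 < t\<close>, of "\<lambda>s. G (z + s *\<^sub>R i)" "\<lambda>s. D (z + s *\<^sub>R i)"] by auto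
    have "norm (z + \<xi> *\<^sub>R i) \<le> 3"
      using norm_triangle_ineq[of z "\<xi> *\<^sub>R i"] False \<xi> t i by simp
    then have "dist (D (z + \<xi> *\<^sub>R i)) (D z) < e"
      using False \<xi> t i by (intro d) (auto simp del: mem_cball simp: dist_norm)
    then show ?thesis
      using \<xi> t by (simp add: dist_norm abs_minus_commute)
  qed
  with t that show thesis
    by blast
qed

text \<open>The difference quotients of \<open>G\<close> have integral \<open>0\<close> by translation invariance,
  and they converge uniformly to \<open>D\<close>.\<close>

lemma directional_derivative_has_integral_0:
  fixes G D :: "'a::euclidean_space \<Rightarrow> real"
  assumes i: "norm i = 1"
    and deriv: "\<And>z. ((\<lambda>s. G (z + s *\<^sub>R i)) has_real_derivative D z) (at 0)"
    and G_cont: "continuous_on UNIV G" and D_cont: "continuous_on UNIV D"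
    and G0: "\<And>z. 1 \<le> norm z \<Longrightarrow> G z = 0" and D0: "\<And>z. 1 \<le> norm z \<Longrightarrow> D z = 0"
  shows "(D has_integral 0) UNIV"
proof -
  let ?C = "cbox (- (2 *\<^sub>R One)) (2 *\<^sub>R One) :: 'a set"
  define c where "c = Henstock_Kurzweil_Integration.content ?C"
  define I where "I = integral UNIV D"
  have D_int: "(D has_integral I) UNIV"
    using integrable_on_UNIV_if_vanishing[where k=1, OF D_cont D0] by (simp add: I_def has_integral_integral)
  have G_int: "(G has_integral integral UNIV G) UNIV"
    using integrable_on_UNIV_if_vanishing[where k=1, OF G_cont G0] by (simp add: has_integral_integral)
  have bound: "\<bar>I\<bar> \<le> e * c" if "0 < e" for e
  proof -
    obtain t where t: "0 < t" "t \<le> 1" and approx: "\<And>z. \<bar>D z - (G (z + t *\<^sub>R i) - G z) / t\<bar> \<le> e"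
      using uniform_approx_by_difference_quotient[OF i deriv D_cont G0 D0 \<open>0 < e\<close>] by blast
    define F where "F z = D z - (G (z + t *\<^sub>R i) - G z) / t" for z
    have "((\<lambda>z. G (z + t *\<^sub>R i)) has_integral integral UNIV G) UNIV"
      using has_integral_affinity_UNIV[OF G_int G0, where m=1 and c="t *\<^sub>R i"] by simp
    from has_integral_divide[OF has_integral_diff[OF this G_int], of t]
    have "((\<lambda>z. (G (z + t *\<^sub>R i) - G z) / t) has_integral 0) UNIV"
      by simp
    from has_integral_diff[OF D_int this]
    have "(F has_integral I) UNIV"
      by (simp add: F_def[abs_def])
    moreover have "F z = 0" if "2 \<le> norm z" for z
      using that one_le_norm_add[of z "t *\<^sub>R i"] t i G0 D0 by (simp add: F_def)
    ultimately have "(F has_integral I) ?C"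
      using has_integral_UNIV_iff_cbox[of 2 F I] by simp
    from has_integral_bound[OF less_imp_le[OF \<open>0 < e\<close>] this] approx
    show ?thesis
      by (simp add: c_def F_def)
  qed
  have "0 \<le> c"
    unfolding c_def by (rule content_pos_le)
  have "\<bar>I\<bar> \<le> 0 + e" if "0 < e" for e
  proof -
    have "\<bar>I\<bar> \<le> e / (c + 1) * c"
      using \<open>0 < e\<close> \<open>0 \<le> c\<close> by (intro bound divide_pos_pos) auto
    also have "\<dots> \<le> e / (c + 1) * (c + 1)"
      using \<open>0 < e\<close> \<open>0 \<le> c\<close> by (intro mult_left_mono) auto
    also have "\<dots> = e"
      using \<open>0 \<le> c\<close> by simp
    finally show ?thesis
      by simp
  qed
  then have "I = 0"
    using field_le_epsilon[of "\<bar>I\<bar>" 0] by simp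
  with D_int show ?thesis
    by simp
qed

lemma add_scaleR_in_cball:
  assumes "0 \<le> \<rho>" "\<rho> \<le> R" "norm z \<le> 1"
  shows "p + \<rho> *\<^sub>R z \<in> cball p R"
proof -
  have "\<rho> * norm z \<le> R * 1"
    using assms by (intro mult_mono) auto
  then show ?thesis
    using assms by (simp add: dist_norm)
qed

lemma has_real_derivative_bump_potential_mult_outside:
  fixes z :: "'a::euclidean_space"
  assumes "1 < norm z"
  shows "((\<lambda>s. bump_potential (z + s *\<^sub>R i) * f s) has_real_derivative 0) (at 0)"
proof -
  have "((\<lambda>s. 0) has_real_derivative 0) (at 0)"
    by simp
  then show ?thesis
  proof (rule has_field_derivative_transform_within_open[where S="{s. 1 < norm (z + s *\<^sub>R i)}"])
    show "open {s. 1 < norm (z + s *\<^sub>R i)}"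
      by (intro open_Collect_less continuous_intros)
  qed (use assms in \<open>auto simp: bump_potential_eq_0\<close>)
qed

locale divergence_free_field =
  fixes S :: "'a::euclidean_space set" and g :: "'a \<Rightarrow> 'a" and Dg :: "'a \<Rightarrow> 'a \<Rightarrow> 'a"
  assumes open_S: "open S"
    and has_derivative_g: "\<And>x. x \<in> S \<Longrightarrow> (g has_derivative Dg x) (at x)"
    and continuous_on_Dg: "\<And>i. i \<in> Basis \<Longrightarrow> continuous_on S (\<lambda>x. Dg x i)"
    and divergence_eq_0: "\<And>x. x \<in> S \<Longrightarrow> (\<Sum>i\<in>Basis. Dg x i \<bullet> i) = 0"
begin

lemma continuous_on_g: "continuous_on S g"
  using has_derivative_g has_derivative_continuous continuous_at_imp_continuous_on by blast

lemma has_real_derivative_bump_potential_mult_component: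
  assumes "p + \<rho> *\<^sub>R z \<in> S"
  shows "((\<lambda>s. bump_potential (z + s *\<^sub>R i) * (g (p + \<rho> *\<^sub>R (z + s *\<^sub>R i)) \<bullet> i)) has_real_derivative
      bump z * (z \<bullet> i) * (g (p + \<rho> *\<^sub>R z) \<bullet> i) + bump_potential z * (\<rho> * (Dg (p + \<rho> *\<^sub>R z) i \<bullet> i))) (at 0)"
proof -
  have line: "((\<lambda>s. z + s *\<^sub>R i) has_derivative (\<lambda>s. s *\<^sub>R i)) (at 0)"
    by (auto intro!: derivative_eq_intros)
  have "((\<lambda>s. bump_potential (z + s *\<^sub>R i)) has_real_derivative bump z * (z \<bullet> i)) (at 0)"
    using has_derivative_compose[OF line has_derivative_bump_potential] unfolding has_field_derivative_def
    by (rule has_derivative_eq_rhs) (auto simp: fun_eq_iff)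
  moreover have "((\<lambda>s. g (p + \<rho> *\<^sub>R (z + s *\<^sub>R i)) \<bullet> i) has_real_derivative
      \<rho> * (Dg (p + \<rho> *\<^sub>R z) i \<bullet> i)) (at 0)"
  proof -
    have "((\<lambda>s. p + \<rho> *\<^sub>R (z + s *\<^sub>R i)) has_derivative (\<lambda>s. s *\<^sub>R (\<rho> *\<^sub>R i))) (at 0)"
      by (auto intro!: derivative_eq_intros simp: algebra_simps)
    from has_derivative_compose[OF this has_derivative_g[OF _]] assms
    have "((\<lambda>s. g (p + \<rho> *\<^sub>R (z + s *\<^sub>R i))) has_derivative
        (\<lambda>s. Dg (p + \<rho> *\<^sub>R z) (s *\<^sub>R (\<rho> *\<^sub>R i)))) (at 0)"
      by simp
    moreover have "linear (Dg (p + \<rho> *\<^sub>R z))"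
      using has_derivative_g[OF assms] has_derivative_linear by blast
    ultimately show ?thesis
      by (auto simp: has_field_derivative_def linear_cmul mult_ac
          intro!: has_derivative_eq_rhs[OF has_derivative_inner_left])
  qed
  ultimately show ?thesis
    by (auto intro!: DERIV_cong[OF DERIV_mult])
qed

lemma bump_flux_component_has_integral_0:
  assumes inS: "\<And>z. norm z \<le> 1 \<Longrightarrow> p + \<rho> *\<^sub>R z \<in> S" and i: "i \<in> Basis"
  shows "((\<lambda>z. bump z * (z \<bullet> i) * (g (p + \<rho> *\<^sub>R z) \<bullet> i)
    + bump_potential z * (\<rho> * (Dg (p + \<rho> *\<^sub>R z) i \<bullet> i))) has_integral 0) UNIV"
proof (rule directional_derivative_has_integral_0)
  define A where "A = (\<lambda>z. p + \<rho> *\<^sub>R z) -` S"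
  have "open A"
    unfolding A_def by (intro open_vimage open_S continuous_intros)
  have A: "cball 0 1 \<subseteq> A"
    using inS by (auto simp: A_def)
  have g_cont: "continuous_on A (\<lambda>z. g (p + \<rho> *\<^sub>R z))"
    unfolding A_def by (intro continuous_on_compose2[OF continuous_on_g] continuous_intros) auto
  show "((\<lambda>s. bump_potential (z + s *\<^sub>R i) * (g (p + \<rho> *\<^sub>R (z + s *\<^sub>R i)) \<bullet> i)) has_real_derivative
      bump z * (z \<bullet> i) * (g (p + \<rho> *\<^sub>R z) \<bullet> i) + bump_potential z * (\<rho> * (Dg (p + \<rho> *\<^sub>R z) i \<bullet> i))) (at 0)"
    for z
  proof (cases "norm z \<le> 1")
    case True
    then show ?thesis
      by (intro has_real_derivative_bump_potential_mult_component inS)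
  next
    case False
    then show ?thesis
      using has_real_derivative_bump_potential_mult_outside[of z] by (simp add: bump_eq_0 bump_potential_eq_0)
  qed
  show "continuous_on UNIV (\<lambda>z. bump_potential z * (g (p + \<rho> *\<^sub>R z) \<bullet> i))"
  proof (rule continuous_on_cutoff_mult[OF \<open>open A\<close> _ continuous_on_bump_potential closed_cball])
    show "continuous_on A (\<lambda>z. g (p + \<rho> *\<^sub>R z) \<bullet> i)"
      by (intro continuous_intros g_cont)
  qed (use A in \<open>auto intro: bump_potential_eq_0\<close>)
  have "continuous_on UNIV (\<lambda>z. bump z * ((z \<bullet> i) * (g (p + \<rho> *\<^sub>R z) \<bullet> i)))"
  proof (rule continuous_on_cutoff_mult[OF \<open>open A\<close> _ continuous_on_bump closed_cball])
    show "continuous_on A (\<lambda>z. (z \<bullet> i) * (g (p + \<rho> *\<^sub>R z) \<bullet> i))"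
      by (intro continuous_intros g_cont)
  qed (use A in \<open>auto intro: bump_eq_0\<close>)
  moreover have "continuous_on UNIV (\<lambda>z. bump_potential z * (\<rho> * (Dg (p + \<rho> *\<^sub>R z) i \<bullet> i)))"
  proof (rule continuous_on_cutoff_mult[OF \<open>open A\<close> _ continuous_on_bump_potential closed_cball])
    show "continuous_on A (\<lambda>z. \<rho> * (Dg (p + \<rho> *\<^sub>R z) i \<bullet> i))"
      unfolding A_def by (intro continuous_intros continuous_on_compose2[OF continuous_on_Dg[OF i]]) auto
  qed (use A in \<open>auto intro: bump_potential_eq_0\<close>)
  ultimately show "continuous_on UNIV (\<lambda>z. bump z * (z \<bullet> i) * (g (p + \<rho> *\<^sub>R z) \<bullet> i)
      + bump_potential z * (\<rho> * (Dg (p + \<rho> *\<^sub>R z) i \<bullet> i)))"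
    by (auto intro: continuous_on_add simp: mult.assoc)
qed (use i in \<open>auto simp: bump_eq_0 bump_potential_eq_0\<close>)

lemma bump_flux_has_integral_0:
  assumes inS: "\<And>z. norm z \<le> 1 \<Longrightarrow> p + \<rho> *\<^sub>R z \<in> S"
  shows "((\<lambda>z. bump z * (g (p + \<rho> *\<^sub>R z) \<bullet> z)) has_integral 0) UNIV"
proof -
  define D where "D i z = bump z * (z \<bullet> i) * (g (p + \<rho> *\<^sub>R z) \<bullet> i)
      + bump_potential z * (\<rho> * (Dg (p + \<rho> *\<^sub>R z) i \<bullet> i))" for i z
  have "((\<lambda>z. \<Sum>i\<in>Basis. D i z) has_integral 0) UNIV"
    using has_integral_sum[of Basis D "\<lambda>_. 0" UNIV] bump_flux_component_has_integral_0[OF inS]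
    by (simp add: D_def[abs_def])
  moreover have "(\<Sum>i\<in>Basis. D i z) = bump z * (g (p + \<rho> *\<^sub>R z) \<bullet> z)" for z
  proof (cases "norm z \<le> 1")
    case True
    have "(\<Sum>i\<in>Basis. D i z) = bump z * (\<Sum>i\<in>Basis. (z \<bullet> i) * (g (p + \<rho> *\<^sub>R z) \<bullet> i))
        + bump_potential z * \<rho> * (\<Sum>i\<in>Basis. Dg (p + \<rho> *\<^sub>R z) i \<bullet> i)"
      by (simp add: D_def sum.distrib sum_distrib_left mult_ac)
    also have "\<dots> = bump z * (z \<bullet> g (p + \<rho> *\<^sub>R z))"
      using divergence_eq_0[OF inS[OF True]] by (simp add: euclidean_inner[of z "g (p + \<rho> *\<^sub>R z)"])
    finally show ?thesis
      by (simp add: inner_commute)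
  next
    case False
    then show ?thesis
      by (simp add: D_def bump_eq_0 bump_potential_eq_0)
  qed
  ultimately show ?thesis
    by simp
qed

end


locale harmonic_with_gradient = divergence_free_field +
  fixes v :: "'a::euclidean_space \<Rightarrow> real"
  assumes has_derivative_v: "\<And>x. x \<in> S \<Longrightarrow> (v has_derivative (\<lambda>h. g x \<bullet> h)) (at x)"
begin

lemma continuous_on_v: "continuous_on S v"
  using has_derivative_v has_derivative_continuous continuous_at_imp_continuous_on by blast

lemma continuous_on_bump_mult_v:
  assumes inS: "\<And>z. norm z \<le> 1 \<Longrightarrow> p + \<rho> *\<^sub>R z \<in> S"
  shows "continuous_on T (\<lambda>z. bump z * v (p + \<rho> *\<^sub>R z))"
proof (rule continuous_on_cutoff_mult[OF _ _ continuous_on_bump closed_cball[of 0 1]])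
  show "open ((\<lambda>z. p + \<rho> *\<^sub>R z) -` S)"
    by (intro open_vimage open_S continuous_intros)
  show "continuous_on ((\<lambda>z. p + \<rho> *\<^sub>R z) -` S) (\<lambda>z. v (p + \<rho> *\<^sub>R z))"
    by (intro continuous_on_compose2[OF continuous_on_v] continuous_intros) auto
qed (use inS in \<open>auto intro: bump_eq_0\<close>)

lemma has_real_derivative_bump_average:
  assumes "cball p R \<subseteq> S" "\<rho> \<in> {0..R}"
  shows "((\<lambda>r. integral (cbox (- One) One) (\<lambda>z. bump z * v (p + r *\<^sub>R z))) has_real_derivative 0)
    (at \<rho> within {0..R})"
proof -
  have inS: "p + r *\<^sub>R z \<in> S" if "r \<in> {0..R}" "norm z \<le> 1" for r z
    using add_scaleR_in_cball[of r R z p] that assms(1) by auto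
  have "((\<lambda>r. integral (cbox (- One) One) (\<lambda>z. bump z * v (p + r *\<^sub>R z))) has_real_derivative
      integral (cbox (- One) One) (\<lambda>z. bump z * (g (p + \<rho> *\<^sub>R z) \<bullet> z))) (at \<rho> within {0..R})"
  proof (rule leibniz_rule_field_derivative)
    fix r z
    assume r: "r \<in> {0..R}"
    show "((\<lambda>r. bump z * v (p + r *\<^sub>R z)) has_field_derivative bump z * (g (p + r *\<^sub>R z) \<bullet> z))
        (at r within {0..R})"
    proof (cases "1 \<le> norm z")
      case True
      then show ?thesis
        by (simp add: bump_eq_0)
    next
      case False
      have "((\<lambda>r. p + r *\<^sub>R z) has_derivative (\<lambda>h. h *\<^sub>R z)) (at r within {0..R})"
        by (auto intro!: derivative_eq_intros)
      then have "((\<lambda>r. v (p + r *\<^sub>R z)) has_derivative (\<lambda>h. g (p + r *\<^sub>R z) \<bullet> (h *\<^sub>R z)))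
          (at r within {0..R})"
        using False r by (intro has_derivative_compose[OF _ has_derivative_v] inS) auto
      then have "((\<lambda>r. v (p + r *\<^sub>R z)) has_real_derivative g (p + r *\<^sub>R z) \<bullet> z) (at r within {0..R})"
        unfolding has_field_derivative_def by (rule has_derivative_eq_rhs) (simp add: fun_eq_iff)
      then show ?thesis
        by (rule DERIV_cmult)
    qed
  next
    fix r
    assume "r \<in> {0..R}"
    then show "(\<lambda>z. bump z * v (p + r *\<^sub>R z)) integrable_on cbox (- One) One"
      by (intro integrable_continuous continuous_on_bump_mult_v inS)
  next
    show "continuous_on ({0..R} \<times> cbox (- One) One) (\<lambda>(r, z). bump z * (g (p + r *\<^sub>R z) \<bullet> z))"
      unfolding case_prod_beta
    proof (rule continuous_on_cutoff_mult[where K="{y. norm (snd y) \<le> 1}"])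
      show "open ((\<lambda>y. p + fst y *\<^sub>R snd y) -` S)"
        by (intro open_vimage open_S continuous_intros)
      show "continuous_on ((\<lambda>y. p + fst y *\<^sub>R snd y) -` S) (\<lambda>y. g (p + fst y *\<^sub>R snd y) \<bullet> snd y)"
        by (intro continuous_intros continuous_on_compose2[OF continuous_on_g]) auto
      show "continuous_on ({0..R} \<times> cbox (- One) One) (\<lambda>y. bump (snd y))"
        by (intro continuous_on_compose2[OF continuous_on_bump] continuous_intros) auto
      show "closed {y :: real \<times> 'a. norm (snd y) \<le> 1}"
        by (intro closed_Collect_le continuous_intros)
      show "{0..R} \<times> cbox (- One) One \<inter> {y. norm (snd y) \<le> 1} \<subseteq> (\<lambda>y. p + fst y *\<^sub>R snd y) -` S"
        using inS by auto
      show "bump (snd y) = 0" if "y \<notin> {y. norm (snd y) \<le> 1}" for y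
        using that by (simp add: bump_eq_0)
    qed
  qed (use assms(2) in auto)
  moreover have "integral (cbox (- One) One) (\<lambda>z. bump z * (g (p + \<rho> *\<^sub>R z) \<bullet> z)) = 0"
  proof (rule integral_unique)
    have F0: "bump z * (g (p + \<rho> *\<^sub>R z) \<bullet> z) = 0" if "1 \<le> norm z" for z
      using that by (simp add: bump_eq_0)
    show "((\<lambda>z. bump z * (g (p + \<rho> *\<^sub>R z) \<bullet> z)) has_integral 0) (cbox (- One) One)"
      using bump_flux_has_integral_0[OF inS[OF assms(2)]]
        has_integral_UNIV_iff_cbox[where k=1 and I=0 and f="\<lambda>z. bump z * (g (p + \<rho> *\<^sub>R z) \<bullet> z)", OF F0]
      by simp
  qed
  ultimately show ?thesis
    by simp
qed

lemma bump_mean_value_cbox: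
  assumes "0 \<le> R" "cball p R \<subseteq> S"
  shows "((\<lambda>z. bump z * v (p + R *\<^sub>R z)) has_integral v p * integral (cbox (- One) One) (bump :: 'a \<Rightarrow> real))
    (cbox (- One) One)"
proof -
  obtain c where c: "\<And>r. r \<in> {0..R} \<Longrightarrow> integral (cbox (- One) One) (\<lambda>z. bump z * v (p + r *\<^sub>R z)) = c"
    using has_field_derivative_zero_constant[OF convex_real_interval(5) has_real_derivative_bump_average[OF assms(2)]]
    by blast
  have "integral (cbox (- One) One) (\<lambda>z. bump z * v (p + R *\<^sub>R z))
      = integral (cbox (- One) One) (\<lambda>z. bump z * v (p + 0 *\<^sub>R z))"
    using assms(1) by (simp only: c atLeastAtMost_iff order_refl)
  also have "\<dots> = v p * integral (cbox (- One) One) (bump :: 'a \<Rightarrow> real)"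
    by simp
  moreover have "(\<lambda>z. bump z * v (p + R *\<^sub>R z)) integrable_on cbox (- One) One"
  proof (intro integrable_continuous continuous_on_bump_mult_v)
    fix z :: 'a
    assume "norm z \<le> 1"
    then show "p + R *\<^sub>R z \<in> S"
      using add_scaleR_in_cball[of R R z p] assms by auto
  qed
  ultimately show ?thesis
    by (simp add: has_integral_iff)
qed

lemma bump_mean_value:
  assumes "0 < R" "cball p R \<subseteq> S"
  shows "((\<lambda>y. bump ((y - p) /\<^sub>R R) * v y) has_integral
    R ^ DIM('a) * (v p * integral (cbox (- One) One) (bump :: 'a \<Rightarrow> real))) UNIV"
proof -
  let ?F = "\<lambda>z. bump z * v (p + R *\<^sub>R z)"
  let ?I = "v p * integral (cbox (- One) One) (bump :: 'a \<Rightarrow> real)"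
  have F0: "?F z = 0" if "1 \<le> norm z" for z
    using that by (simp add: bump_eq_0)
  have "(?F has_integral ?I) UNIV"
    using bump_mean_value_cbox[OF less_imp_le[OF assms(1)] assms(2)]
      has_integral_UNIV_iff_cbox[where k=1 and I="?I" and f="?F", OF F0] by simp
  from has_integral_affinity_UNIV[OF this F0, where m="1 / R" and c="- (p /\<^sub>R R)"]
  have "((\<lambda>y. ?F ((1 / R) *\<^sub>R y + - (p /\<^sub>R R))) has_integral ?I / \<bar>1 / R\<bar> ^ DIM('a)) UNIV"
    using assms(1) by simp
  moreover have "?F ((1 / R) *\<^sub>R y + - (p /\<^sub>R R)) = bump ((y - p) /\<^sub>R R) * v y" for y
    using assms(1) by (simp add: scaleR_right_diff_distrib divide_inverse_commute)
  moreover have "?I / \<bar>1 / R\<bar> ^ DIM('a) = R ^ DIM('a) * ?I"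
    using assms(1) by (simp add: power_one_over)
  ultimately show ?thesis
    by simp
qed

end

lemma harmonic_on_iff_harmonic_with_gradient:
  fixes v :: "'a::euclidean_space \<Rightarrow> real"
  shows "harmonic_on v S \<longleftrightarrow> (\<exists>g Dg. harmonic_with_gradient S g Dg v)"
  unfolding harmonic_on_def harmonic_with_gradient_def harmonic_with_gradient_axioms_def divergence_free_field_def
  by blast

lemma harmonic_on_imp_continuous_on: "harmonic_on v S \<Longrightarrow> continuous_on S v"
  using harmonic_with_gradient.continuous_on_v harmonic_on_iff_harmonic_with_gradient by blast

lemma harmonic_on_bump_mean_value:
  fixes v :: "'a::euclidean_space \<Rightarrow> real"
  assumes "harmonic_on v S" "0 < R" "cball p R \<subseteq> S"
  shows "((\<lambda>y. bump ((y - p) /\<^sub>R R) * v y) has_integral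
    R ^ DIM('a) * (v p * integral (cbox (- One) One) (bump :: 'a \<Rightarrow> real))) UNIV"
  using assms harmonic_with_gradient.bump_mean_value harmonic_on_iff_harmonic_with_gradient by blast

lemma harmonic_on_const_diff:
  assumes "harmonic_on u S"
  shows "harmonic_on (\<lambda>x. c - u x) S"
proof -
  obtain g Dg where "harmonic_with_gradient S g Dg u"
    using assms harmonic_on_iff_harmonic_with_gradient by blast
  then interpret harmonic_with_gradient S g Dg u .
  have "harmonic_with_gradient S (\<lambda>x. - g x) (\<lambda>x h. - Dg x h) (\<lambda>x. c - u x)"
  proof unfold_locales
    show "((\<lambda>x. - g x) has_derivative (\<lambda>h. - Dg x h)) (at x)" if "x \<in> S" for x
      using has_derivative_g[OF that] by (rule has_derivative_minus)
    show "((\<lambda>x. c - u x) has_derivative (\<lambda>h. - g x \<bullet> h)) (at x)" if "x \<in> S" for x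
      using has_derivative_diff[OF has_derivative_const has_derivative_v[OF that]] by simp
  qed (use open_S continuous_on_Dg divergence_eq_0 in \<open>auto intro: continuous_on_minus simp: sum_negf\<close>)
  then show ?thesis
    using harmonic_on_iff_harmonic_with_gradient by blast
qed

lemma integral_bump_pos: "0 < integral (cbox (- One) One) (bump :: 'a::euclidean_space \<Rightarrow> real)"
proof -
  let ?Q = "cbox (- One) (One :: 'a)"
  have int: "(bump has_integral integral ?Q bump) ?Q"
    by (intro integrable_integral integrable_continuous continuous_on_bump)
  have "integral ?Q bump \<noteq> 0"
  proof
    assume "integral ?Q bump = 0"
    then have "bump (0 :: 'a) = 0"
      using int by (intro has_integral_0_cbox_imp_0[OF continuous_on_bump])
        (auto simp: bump_nonneg box_ne_empty mem_box inner_minus_left)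
    then show False
      by (simp add: bump_0)
  qed
  moreover have "0 \<le> integral ?Q bump"
    using int by (intro integral_nonneg) (auto simp: bump_nonneg has_integral_integrable)
  ultimately show ?thesis
    by simp
qed

lemma norm_diff_scaleR_inverse:
  fixes x z :: "'a::real_normed_vector"
  shows "norm ((z - x) /\<^sub>R R) = dist x z / \<bar>R\<bar>"
  by (simp add: dist_norm norm_minus_commute divide_inverse_commute)

lemma bump_rescaled_comparison:
  fixes x y z :: "'a::euclidean_space"
  assumes "0 < \<rho>" "dist x y + \<rho> \<le> 7/8 * R"
  shows "(15/64) ^ 3 * bump ((z - y) /\<^sub>R \<rho>) \<le> bump ((z - x) /\<^sub>R R)"
proof (cases "dist y z < \<rho>")
  case True
  have "0 < R"
    using assms zero_le_dist[of x y] by linarith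
  have "dist x z < 7/8 * R"
    using True assms dist_triangle[of x z y] by linarith
  then have "norm ((z - x) /\<^sub>R R) \<le> 7/8"
    using \<open>0 < R\<close> unfolding norm_diff_scaleR_inverse by (simp add: pos_divide_le_eq)
  from bump_ge[OF this] have "(15/64) ^ 3 \<le> bump ((z - x) /\<^sub>R R)"
    by (simp add: power2_eq_square)
  moreover have "(15/64) ^ 3 * bump ((z - y) /\<^sub>R \<rho>) \<le> (15/64) ^ 3"
    using bump_le_1 by simp
  ultimately show ?thesis
    by linarith
next
  case False
  then have "1 \<le> norm ((z - y) /\<^sub>R \<rho>)"
    using \<open>0 < \<rho>\<close> unfolding norm_diff_scaleR_inverse by (simp add: le_divide_eq)
  then show ?thesis
    by (simp add: bump_eq_0 bump_nonneg)
qed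

lemma harmonic_on_nonneg_harnack:
  fixes w :: "'a::euclidean_space \<Rightarrow> real"
  assumes w: "harmonic_on w S" and "cball x R \<subseteq> S" and w_nonneg: "\<And>z. z \<in> ball x R \<Longrightarrow> 0 \<le> w z"
    and "0 < \<rho>" and y: "dist x y + \<rho> \<le> 7/8 * R"
  shows "w y \<le> (64/15) ^ 3 * (R / \<rho>) ^ DIM('a) * w x"
proof -
  define A where "A = integral (cbox (- One) One) (bump :: 'a \<Rightarrow> real)"
  have "0 < R"
    using y \<open>0 < \<rho>\<close> zero_le_dist[of x y] by linarith
  have "cball y \<rho> \<subseteq> cball x R"
  proof
    fix z
    assume "z \<in> cball y \<rho>"
    then show "z \<in> cball x R"
      using y dist_triangle[of x z y] \<open>0 < R\<close> by simp
  qed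
  with \<open>cball x R \<subseteq> S\<close> have "cball y \<rho> \<subseteq> S"
    by blast
  have Ix: "((\<lambda>z. bump ((z - x) /\<^sub>R R) * w z) has_integral R ^ DIM('a) * (w x * A)) UNIV"
    unfolding A_def using w \<open>0 < R\<close> \<open>cball x R \<subseteq> S\<close> by (rule harmonic_on_bump_mean_value)
  have Iy: "((\<lambda>z. (15/64) ^ 3 * bump ((z - y) /\<^sub>R \<rho>) * w z) has_integral
      (15/64) ^ 3 * (\<rho> ^ DIM('a) * (w y * A))) UNIV"
    unfolding A_def using has_integral_mult_right[OF harmonic_on_bump_mean_value[OF w \<open>0 < \<rho>\<close> \<open>cball y \<rho> \<subseteq> S\<close>]]
    by (simp add: mult.assoc)
  have "(15/64) ^ 3 * bump ((z - y) /\<^sub>R \<rho>) * w z \<le> bump ((z - x) /\<^sub>R R) * w z" for z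
  proof (cases "z \<in> ball x R")
    case True
    then show ?thesis
      using bump_rescaled_comparison[OF \<open>0 < \<rho>\<close> y] w_nonneg by (intro mult_right_mono)
  next
    case False
    then have "bump ((z - x) /\<^sub>R R) = 0"
      using \<open>0 < R\<close> by (intro bump_eq_0) (unfold norm_diff_scaleR_inverse, simp add: le_divide_eq)
    moreover from this have "bump ((z - y) /\<^sub>R \<rho>) = 0"
      using bump_rescaled_comparison[OF \<open>0 < \<rho>\<close> y, of z] bump_nonneg[of "(z - y) /\<^sub>R \<rho>"]
      by (simp add: mult_le_0_iff)
    ultimately show ?thesis
      by simp
  qed
  from has_integral_le[OF Iy Ix this]
  have "((15/64) ^ 3 * \<rho> ^ DIM('a) * w y) * A \<le> (R ^ DIM('a) * w x) * A"
    by (simp add: mult_ac)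
  then have "(15/64) ^ 3 * \<rho> ^ DIM('a) * w y \<le> R ^ DIM('a) * w x"
    using mult_le_cancel_right_pos[OF integral_bump_pos] unfolding A_def by blast
  then show ?thesis
    using \<open>0 < \<rho>\<close> by (simp add: power_divide field_simps)
qed

lemma harmonic_on_sup_abs_le:
  fixes u :: "'a::euclidean_space \<Rightarrow> real"
  assumes "0 < r" and u: "harmonic_on u (ball x (2 * r))" and "0 \<le> u x"
  shows "(SUP y\<in>ball x r. \<bar>u y\<bar>) \<le> (8 ^ DIM('a) * (64/15) ^ 3 + 1) * (SUP y\<in>ball x (4/3 * r). u y)"
proof -
  define M where "M = (SUP y\<in>ball x (4/3 * r). u y)"
  define C :: real where "C = 8 ^ DIM('a) * (64/15) ^ 3"
  have "cball x (4/3 * r) \<subseteq> ball x (2 * r)"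
    using \<open>0 < r\<close> by auto
  then have "compact (u ` cball x (4/3 * r))"
    using harmonic_on_imp_continuous_on[OF u] by (intro compact_continuous_image) (auto intro: continuous_on_subset)
  then have "bdd_above (u ` ball x (4/3 * r))"
    by (meson bdd_above_mono bounded_imp_bdd_above compact_imp_bounded ball_subset_cball image_mono)
  then have u_le_M: "u y \<le> M" if "y \<in> ball x (4/3 * r)" for y
    unfolding M_def using that by (rule cSUP_upper2) simp
  have "0 \<le> M"
    using u_le_M[of x] \<open>0 < r\<close> \<open>0 \<le> u x\<close> by simp
  have osc: "M - u y \<le> C * (M - u x)" if y: "y \<in> ball x r" for y
  proof -
    have "M - u y \<le> (64/15) ^ 3 * ((4/3 * r) / (r / 6)) ^ DIM('a) * (M - u x)"
    proof (rule harmonic_on_nonneg_harnack[OF harmonic_on_const_diff[OF u]])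
      show "cball x (4/3 * r) \<subseteq> ball x (2 * r)"
        by fact
      show "0 \<le> M - u z" if "z \<in> ball x (4/3 * r)" for z
        using u_le_M[OF that] by simp
      show "dist x y + r / 6 \<le> 7/8 * (4/3 * r)"
        using y by simp
    qed (use \<open>0 < r\<close> in simp)
    then show ?thesis
      using \<open>0 < r\<close> by (simp add: C_def mult.commute)
  qed
  have CM: "C * (M - u x) \<le> C * M" "0 \<le> C * M"
    using \<open>0 \<le> M\<close> \<open>0 \<le> u x\<close> by (simp_all add: C_def)
  have "\<bar>u y\<bar> \<le> (C + 1) * M" if "y \<in> ball x r" for y
  proof -
    have "u y \<le> M"
      using u_le_M that \<open>0 < r\<close> by simp
    then show ?thesis
      using osc[OF that] CM \<open>0 \<le> M\<close> by (simp add: abs_le_iff distrib_right)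
  qed
  then show ?thesis
    using \<open>0 < r\<close> by (intro cSUP_least) (auto simp: M_def C_def)
qed

theorem claim2p2:
  "\<exists>c>0. \<forall>(x::'a::euclidean_space) (r::real) (u::'a \<Rightarrow> real).
     r > 0 \<longrightarrow> harmonic_on u (ball x (2 * r)) \<longrightarrow>
     \<not> (\<exists>k. \<forall>y\<in>ball x (2 * r). u y = k) \<longrightarrow> u x \<ge> 0 \<longrightarrow>
     (SUP y\<in>ball x (4/3 * r). u y) \<ge> c * (SUP y\<in>ball x r. \<bar>u y\<bar>)"
proof (intro exI[of _ "1 / (8 ^ DIM('a) * (64/15) ^ 3 + 1)"] conjI allI impI)
  have C: "0 < 8 ^ DIM('a) * (64/15) ^ 3 + (1 :: real)"
    by (simp add: add_pos_nonneg)
  then show "0 < 1 / (8 ^ DIM('a) * (64/15) ^ 3 + (1 :: real))"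
    by simp
  fix x :: 'a and r :: real and u :: "'a \<Rightarrow> real"
  assume "0 < r" and u: "harmonic_on u (ball x (2 * r))"
    and "\<not> (\<exists>k. \<forall>y\<in>ball x (2 * r). u y = k)" and "0 \<le> u x"
  from harmonic_on_sup_abs_le[OF \<open>0 < r\<close> u \<open>0 \<le> u x\<close>] C
  show "1 / (8 ^ DIM('a) * (64/15) ^ 3 + 1) * (SUP y\<in>ball x r. \<bar>u y\<bar>) \<le> (SUP y\<in>ball x (4/3 * r). u y)"
    by (simp add: divide_le_eq mult.commute)
qed

end
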